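(* For all integers $n\ge 2$ and $M\ge 1$, $C_{AD}(n,M)\le C_{CD}(n,M)\le (n-1)\log_2 M$.
   Context: There are $n$ nodes labeled $1,\dots,n$; node $i$ privately holds an input $x_i\in\{1,\dots,M\}$. Communication is over private point-to-point links of a fully connected synchronous network. A deterministic protocol $P$ is a fixed finite schedule of steps $l=1,\dots,L(P)$; in step $l$ a prescribed node $T_l$ sends to a prescribed node $R_l\neq T_l$ one symbol $f_l(x_{T_l},T_l^+(l))$, where $T_l^+(l)$ is the sequence of symbols $T_l$ has received in steps $1,\dots,l-1$; only $R_l$ receives it. Its complexity is $C(P)=\sum_{l}\log_2 S_l(P)$, with $S_l(P)$ the number of distinct values of the step-$l$ symbol over all inputs in $\{1,\dots,M\}^n$. At the end each node $i$ outputs a bit $EQ_i$ depending on $x_i$ and the symbols it received. $P$ solves MEQ-AD$(n,M)$ if for every input, $EQ_1=\cdots=EQ_n=0$ iff $x_1=\cdots=x_n$; $P$ solves MEQ-CD$(n,M)$ if for every input, $EQ_n=0$ iff $x_1=\cdots=x_n$. $C_{AD}(n,M)$ and $C_{CD}(n,M)$ are the infima of $C(P)$ over protocols solving MEQ-AD$(n,M)$, respectively MEQ-CD$(n,M)$. *)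

theory Defs
  imports Complex_Main "HOL-Library.FuncSet"
begin

text \<open>Steps are indexed 0..<len (step l here is
step l+1 of the paper). Symbols are natural numbers (any countable alphabet suffices).
tx l / rx l are the sender / receiver of step l, msg l v r is the symbol sent in step l
by a sender with input v having received the symbol sequence r so far, and
out i v r is the output bit EQ_i of node i with input v and received sequence r
(False = 0, True = 1).\<close>

record protocol =
  len :: nat
  tx  :: "nat \<Rightarrow> nat"
  rx  :: "nat \<Rightarrow> nat"
  msg :: "nat \<Rightarrow> nat \<Rightarrow> nat list \<Rightarrow> nat"
  out :: "nat \<Rightarrow> nat \<Rightarrow> nat list \<Rightarrow> bool"

definition wf_protocol :: "nat \<Rightarrow> protocol \<Rightarrow> bool" where
  "wf_protocol n P \<longleftrightarrow>
     (\<forall>l < len P. tx P l \<in> {1..n} \<and> rx P l \<in> {1..n} \<and> tx P l \<noteq> rx P l)"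

fun syms :: "protocol \<Rightarrow> (nat \<Rightarrow> nat) \<Rightarrow> nat \<Rightarrow> nat list" where
  "syms P x 0 = []"
| "syms P x (Suc l) =
     syms P x l @
     [msg P l (x (tx P l))
        (map (\<lambda>k. syms P x l ! k) (filter (\<lambda>k. rx P k = tx P l) [0..<l]))]"

definition received :: "protocol \<Rightarrow> (nat \<Rightarrow> nat) \<Rightarrow> nat \<Rightarrow> nat \<Rightarrow> nat list" where
  "received P x i l = map (\<lambda>k. syms P x l ! k) (filter (\<lambda>k. rx P k = i) [0..<l])"

definition sym :: "protocol \<Rightarrow> (nat \<Rightarrow> nat) \<Rightarrow> nat \<Rightarrow> nat" where
  "sym P x l = syms P x (Suc l) ! l"

definition EQ :: "protocol \<Rightarrow> (nat \<Rightarrow> nat) \<Rightarrow> nat \<Rightarrow> bool" where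
  "EQ P x i = out P i (x i) (received P x i (len P))"

definition inputs :: "nat \<Rightarrow> nat \<Rightarrow> (nat \<Rightarrow> nat) set" where
  "inputs n M = Pi\<^sub>E {1..n} (\<lambda>_. {1..M})"

definition num_vals :: "nat \<Rightarrow> nat \<Rightarrow> protocol \<Rightarrow> nat \<Rightarrow> nat" where
  "num_vals n M P l = card ((\<lambda>x. sym P x l) ` inputs n M)"

definition cost :: "nat \<Rightarrow> nat \<Rightarrow> protocol \<Rightarrow> real" where
  "cost n M P = (\<Sum>l<len P. log 2 (real (num_vals n M P l)))"

definition all_equal :: "nat \<Rightarrow> (nat \<Rightarrow> nat) \<Rightarrow> bool" where
  "all_equal n x \<longleftrightarrow> (\<forall>i\<in>{1..n}. \<forall>j\<in>{1..n}. x i = x j)"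

definition solves_AD :: "nat \<Rightarrow> nat \<Rightarrow> protocol \<Rightarrow> bool" where
  "solves_AD n M P \<longleftrightarrow> wf_protocol n P \<and>
     (\<forall>x\<in>inputs n M. (\<forall>i\<in>{1..n}. \<not> EQ P x i) \<longleftrightarrow> all_equal n x)"

definition solves_CD :: "nat \<Rightarrow> nat \<Rightarrow> protocol \<Rightarrow> bool" where
  "solves_CD n M P \<longleftrightarrow> wf_protocol n P \<and>
     (\<forall>x\<in>inputs n M. \<not> EQ P x n \<longleftrightarrow> all_equal n x)"

definition C_AD :: "nat \<Rightarrow> nat \<Rightarrow> real" where
  "C_AD n M = Inf (cost n M ` {P. solves_AD n M P})"

definition C_CD :: "nat \<Rightarrow> nat \<Rightarrow> real" where
  "C_CD n M = Inf (cost n M ` {P. solves_CD n M P})"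

end

theory Submission
  imports Defs
begin

text \<open>Restricting the output of a CD protocol to node n changes neither its messages
nor its cost and yields an AD protocol, so C_AD \<le> C_CD. For the upper bound, every
node i < n sends its input to node n, which compares: n - 1 steps, each with M
possible symbols.\<close>

lemma log2_of_nat_nonneg: "0 \<le> log 2 (real k)"
  \<comment> \<open>for k = 0 this is the junk value ln 0 = 0\<close>
  by (cases "k = 0") (simp_all add: log_def)

lemma cost_nonneg: "0 \<le> cost n M P"
  unfolding cost_def by (intro sum_nonneg log2_of_nat_nonneg)

lemma bdd_below_cost_image: "bdd_below (cost n M ` S)"
  using cost_nonneg by (intro bdd_belowI) blast

lemma const_in_inputs: "v \<in> {1..M} \<Longrightarrow> (\<lambda>i\<in>{1..n}. v) \<in> inputs n M"
  unfolding inputs_def by auto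

lemma all_equal_iff_eq_last:
  assumes "n \<ge> 1"
  shows "all_equal n x \<longleftrightarrow> (\<forall>i\<in>{1..<n}. x i = x n)"
  using assms unfolding all_equal_def by (metis atLeastAtMost_iff atLeastLessThan_iff
      le_eq_less_or_eq)

lemma syms_update_out [simp]: "syms (P\<lparr>out := f\<rparr>) x l = syms P x l"
  by (induction l) simp_all

definition only_node_outputs :: "nat \<Rightarrow> protocol \<Rightarrow> protocol" where
  "only_node_outputs n P = P\<lparr>out := (\<lambda>i v r. i = n \<and> out P i v r)\<rparr>"

lemma EQ_only_node_outputs: "EQ (only_node_outputs n P) x i \<longleftrightarrow> i = n \<and> EQ P x i"
  unfolding EQ_def received_def only_node_outputs_def by simp

lemma cost_only_node_outputs: "cost n M (only_node_outputs n P) = cost n M P"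
  unfolding cost_def num_vals_def sym_def only_node_outputs_def by simp

lemma solves_AD_only_node_outputs:
  assumes "n \<ge> 1" and "solves_CD n M P"
  shows "solves_AD n M (only_node_outputs n P)"
proof -
  have "(\<forall>i\<in>{1..n}. \<not> EQ (only_node_outputs n P) x i) \<longleftrightarrow> \<not> EQ P x n" for x
    using assms(1) by (auto simp: EQ_only_node_outputs)
  moreover have "wf_protocol n (only_node_outputs n P)"
    using assms(2) unfolding solves_CD_def wf_protocol_def only_node_outputs_def by simp
  ultimately show ?thesis
    using assms(2) unfolding solves_AD_def solves_CD_def by simp
qed

lemma C_AD_le_C_CD:
  assumes "n \<ge> 1" and "\<exists>P. solves_CD n M P"
  shows "C_AD n M \<le> C_CD n M"
  unfolding C_AD_def C_CD_def
proof (rule cInf_mono)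
  show "cost n M ` {P. solves_CD n M P} \<noteq> {}" using assms(2) by blast
  fix c assume "c \<in> cost n M ` {P. solves_CD n M P}"
  then obtain P where "solves_CD n M P" and c: "c = cost n M P" by blast
  then have "cost n M (only_node_outputs n P) \<in> cost n M ` {P. solves_AD n M P}"
    using solves_AD_only_node_outputs[OF assms(1)] by blast
  then show "\<exists>a\<in>cost n M ` {P. solves_AD n M P}. a \<le> c"
    unfolding c cost_only_node_outputs by blast
qed (rule bdd_below_cost_image)

lemma C_CD_le_cost: "solves_CD n M P \<Longrightarrow> C_CD n M \<le> cost n M P"
  unfolding C_CD_def by (intro cInf_lower bdd_below_cost_image) blast

definition star_protocol :: "nat \<Rightarrow> protocol" where
  "star_protocol n = \<lparr>len = n - 1, tx = (\<lambda>l. l + 1), rx = (\<lambda>_. n),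
     msg = (\<lambda>l v r. v), out = (\<lambda>i v r. \<exists>u\<in>set r. u \<noteq> v)\<rparr>"

lemma star_protocol_simps [simp]:
  "len (star_protocol n) = n - 1"
  "tx (star_protocol n) = (\<lambda>l. l + 1)"
  "rx (star_protocol n) = (\<lambda>_. n)"
  "msg (star_protocol n) = (\<lambda>l v r. v)"
  "out (star_protocol n) = (\<lambda>i v r. \<exists>u\<in>set r. u \<noteq> v)"
  by (simp_all add: star_protocol_def)

lemma syms_star_protocol: "syms (star_protocol n) x l = map (\<lambda>k. x (k + 1)) [0..<l]"
  by (induction l) simp_all

lemma sym_star_protocol: "sym (star_protocol n) x l = x (l + 1)"
  unfolding sym_def syms_star_protocol by (simp del: upt_Suc add: nth_append)

lemma EQ_star_protocol: "EQ (star_protocol n) x n \<longleftrightarrow> (\<exists>i\<in>{1..<n}. x i \<noteq> x n)"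
proof -
  have "received (star_protocol n) x n (n - 1) = map (\<lambda>k. x (k + 1)) [0..<n - 1]"
    unfolding received_def syms_star_protocol by simp
  moreover have "(\<lambda>k. k + 1) ` {0..<n - 1} = {1..<n}"
    by (cases n) simp_all
  ultimately have "set (received (star_protocol n) x n (n - 1)) = x ` {1..<n}"
    by (metis image_image set_map set_upt)
  then show ?thesis unfolding EQ_def by auto
qed

lemma solves_CD_star_protocol:
  assumes "n \<ge> 2"
  shows "solves_CD n M (star_protocol n)"
proof -
  have "wf_protocol n (star_protocol n)"
    unfolding wf_protocol_def using assms by auto
  moreover have "\<not> EQ (star_protocol n) x n \<longleftrightarrow> all_equal n x" for x
    using assms by (simp add: EQ_star_protocol all_equal_iff_eq_last)
  ultimately show ?thesis unfolding solves_CD_def by simp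
qed

lemma num_vals_star_protocol:
  assumes "l < n - 1"
  shows "num_vals n M (star_protocol n) l = M"
proof -
  have "l + 1 \<in> {1..n}" using assms by simp
  then have "(\<lambda>x. sym (star_protocol n) x l) ` inputs n M = {1..M}"
    unfolding sym_star_protocol
  proof (intro equalityI subsetI)
    fix v assume "v \<in> {1..M}"
    then have "(\<lambda>i\<in>{1..n}. v) \<in> inputs n M" by (rule const_in_inputs)
    with \<open>l + 1 \<in> {1..n}\<close> show "v \<in> (\<lambda>x. x (l + 1)) ` inputs n M"
      by (intro image_eqI[where x = "\<lambda>i\<in>{1..n}. v"]) simp_all
  qed (auto simp: inputs_def)
  then show ?thesis unfolding num_vals_def by simp
qed

lemma cost_star_protocol: "cost n M (star_protocol n) = real (n - 1) * log 2 (real M)"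
  unfolding cost_def by (simp add: num_vals_star_protocol)

theorem mainTheorem5:
  fixes n M :: nat
  assumes "n \<ge> 2" and "M \<ge> 1"
  shows "C_AD n M \<le> C_CD n M \<and> C_CD n M \<le> real (n - 1) * log 2 (real M)"
proof
  have star: "solves_CD n M (star_protocol n)"
    using assms(1) by (rule solves_CD_star_protocol)
  show "C_AD n M \<le> C_CD n M"
    using assms(1) star by (intro C_AD_le_C_CD) auto
  show "C_CD n M \<le> real (n - 1) * log 2 (real M)"
    using C_CD_le_cost[OF star] by (simp add: cost_star_protocol)
qed

end
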